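(* Fix $0<p<1$, $q=1-p$, and integers $L<U$ with $U-L\ge 4$. With the notation of the context, the function $x\mapsto\alpha(x)=\lim_{k\to\infty}\alpha_k(x)$ on the integers $x\in[L,U]$ is the unique solution of the linear system $$\alpha(x)=\begin{cases}0,&x=U,\\ q\,\alpha(x-1),&x=U-1,\\ pq\,\alpha(x)+q\,\alpha(x-1),&x=U-2,\\ pq\,\alpha(x)+p\,\alpha(x+2)-pq\,\alpha(x+1)+q\,\alpha(x-1),&L+1\le x\le U-3,\\ 1,&x=L,\end{cases}$$ and the function $x\mapsto\beta(x)=\lim_{k\to\infty}\beta_k(x)$ on the integers $x\in[L,U]$ is the unique solution of the linear system $$\beta(x)=\begin{cases}1,&x=U,\\ p+q\,\beta(x-1),&x=U-1,\\ p^2+pq\,\beta(x)+q\,\beta(x-1),&x=U-2,\\ pq\,\beta(x)+p\,\beta(x+2)-pq\,\beta(x+1)+q\,\beta(x-1),&L+1\le x\le U-3,\\ 0,&x=L.\end{cases}$$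
   Context: Let $\xi_1,\xi_2,\dots$ be i.i.d. random variables with values in $\{1,-1\}$, $\mathbb{P}(\xi_i=1)=p$, $\mathbb{P}(\xi_i=-1)=q:=1-p$. Define $X_k=-1$ if $\xi_k=-1$; $X_k=2$ if $\xi_k=\xi_{k-1}=1$ (for $k\ge 2$); and $X_k=1$ otherwise (in particular $X_1=1$ when $\xi_1=1$). Let $S_0=0$, $S_k=X_1+\dots+X_k$, and $S^x_k=x+S_k$. For integers $L<U$ and $k\ge 0$ let $\tau^x_k=\min\{l\in\{0,\dots,k\}: S^x_l\le L \text{ or } S^x_l\ge U\}$ if this set is nonempty, and $\tau^x_k=k$ otherwise. Let $\mathcal{A}^x_k=\bigcup_{l=0}^k\{\tau^x_k=l,\ S^x_l\le L\}$, $\mathcal{B}^x_k=\bigcup_{l=0}^k\{\tau^x_k=l,\ S^x_l\ge U\}$, $\alpha_k(x)=\mathbb{P}(\mathcal{A}^x_k)$, $\beta_k(x)=\mathbb{P}(\mathcal{B}^x_k)$. These sequences are nondecreasing in $k$, so the limits $\alpha(x),\beta(x)$ exist. *)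

theory Defs
  imports Complex_Main
begin

text \<open>A realization of the first k signs xi_1..xi_k is a bool list xs of length k,
  with xs ! (i-1) = True meaning xi_i = 1 and False meaning xi_i = -1.
  Its probability under the i.i.d. law with P(xi=1)=p is the product weight.\<close>

definition seq_weight :: "real \<Rightarrow> bool list \<Rightarrow> real" where
  "seq_weight p xs = (\<Prod>b\<leftarrow>xs. if b then p else 1 - p)"

definition Xstep :: "bool list \<Rightarrow> nat \<Rightarrow> int" where
  "Xstep xs i = (if \<not> xs ! (i - 1) then -1
                 else if i \<ge> 2 \<and> xs ! (i - 2) then 2 else 1)"

definition Ssum :: "bool list \<Rightarrow> nat \<Rightarrow> int" where
  "Ssum xs l = (\<Sum>i=1..l. Xstep xs i)"

definition Sx :: "int \<Rightarrow> bool list \<Rightarrow> nat \<Rightarrow> int" where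
  "Sx x xs l = x + Ssum xs l"

definition tau :: "int \<Rightarrow> int \<Rightarrow> int \<Rightarrow> nat \<Rightarrow> bool list \<Rightarrow> nat" where
  "tau L U x k xs =
     (if \<exists>l\<le>k. Sx x xs l \<le> L \<or> Sx x xs l \<ge> U
      then (LEAST l. l \<le> k \<and> (Sx x xs l \<le> L \<or> Sx x xs l \<ge> U))
      else k)"

definition eventA :: "int \<Rightarrow> int \<Rightarrow> int \<Rightarrow> nat \<Rightarrow> bool list \<Rightarrow> bool" where
  "eventA L U x k xs = (\<exists>l\<le>k. tau L U x k xs = l \<and> Sx x xs l \<le> L)"

definition eventB :: "int \<Rightarrow> int \<Rightarrow> int \<Rightarrow> nat \<Rightarrow> bool list \<Rightarrow> bool" where
  "eventB L U x k xs = (\<exists>l\<le>k. tau L U x k xs = l \<and> Sx x xs l \<ge> U)"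

definition alpha_k :: "real \<Rightarrow> int \<Rightarrow> int \<Rightarrow> nat \<Rightarrow> int \<Rightarrow> real" where
  "alpha_k p L U k x =
     (\<Sum>xs\<in>{xs :: bool list. length xs = k}. if eventA L U x k xs then seq_weight p xs else 0)"

definition beta_k :: "real \<Rightarrow> int \<Rightarrow> int \<Rightarrow> nat \<Rightarrow> int \<Rightarrow> real" where
  "beta_k p L U k x =
     (\<Sum>xs\<in>{xs :: bool list. length xs = k}. if eventB L U x k xs then seq_weight p xs else 0)"

definition alpha :: "real \<Rightarrow> int \<Rightarrow> int \<Rightarrow> int \<Rightarrow> real" where
  "alpha p L U x = lim (\<lambda>k. alpha_k p L U k x)"

definition beta :: "real \<Rightarrow> int \<Rightarrow> int \<Rightarrow> int \<Rightarrow> real" where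
  "beta p L U x = lim (\<lambda>k. beta_k p L U k x)"

end

theory Submission
  imports Defs
begin

text \<open>
  Together with the position, remember whether the last sign was \<open>+1\<close>; this is a Markov
  chain. Conditioning on the first sign, the probabilities \<open>a x\<close> and \<open>c x\<close> of leaving
  \<open>(L, U)\<close> through a given side, starting at \<open>x\<close> after a sign \<open>-1\<close> resp. \<open>+1\<close>, satisfy
  \<open>a x = q a (x - 1) + p c (x + 1)\<close> and \<open>c x = q a (x - 1) + p c (x + 2)\<close>: exactly for the
  \<open>k\<close>-step probabilities, hence also in the limit. Eliminating \<open>c\<close> gives the stated system
  for \<open>\<alpha> = a\<close> (and \<open>\<beta>\<close>). Conversely, every solution \<open>f\<close> of the stated system extends to a
  solution \<open>(f, c)\<close> of the two-state system, and the homogeneous two-state system has only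
  the trivial solution by a maximum principle: the rightmost state where \<open>\<bar>a\<bar>\<close> or \<open>\<bar>c\<bar>\<close>
  attains a positive maximum would pass that maximum on to a state further right.
\<close>

definition step_incr :: "bool \<Rightarrow> bool \<Rightarrow> int" where
  "step_incr prev b = (if b then (if prev then 2 else 1) else -1)"

lemma step_incr_False [simp]: "step_incr prev False = -1"
  by (simp add: step_incr_def)

text \<open>\<open>prev\<close> is the sign preceding \<open>xs\<close>; \<open>False\<close> also models the start, where \<open>X\<^sub>1 = 1\<close>
  if \<open>\<xi>\<^sub>1 = 1\<close>.\<close>

definition walk :: "bool \<Rightarrow> int \<Rightarrow> bool list \<Rightarrow> nat \<Rightarrow> int" where
  "walk prev x xs l = x + (\<Sum>i<l. step_incr ((prev # xs) ! i) (xs ! i))"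

lemma walk_0 [simp]: "walk prev x xs 0 = x"
  by (simp add: walk_def)

lemma walk_Cons_Suc [simp]:
  "walk prev x (b # bs) (Suc l) = walk b (x + step_incr prev b) bs l"
  unfolding walk_def sum.lessThan_Suc_shift by simp

lemma Sx_eq_walk: "Sx x xs l = walk False x xs l"
proof -
  have "Xstep xs (Suc i) = step_incr ((False # xs) ! i) (xs ! i)" for i
    by (cases i) (simp_all add: Xstep_def step_incr_def)
  then show ?thesis
    by (simp add: Sx_def Ssum_def walk_def sum.atLeast1_atMost_eq)
qed

fun hits :: "int \<Rightarrow> int \<Rightarrow> (int \<Rightarrow> bool) \<Rightarrow> bool \<Rightarrow> int \<Rightarrow> bool list \<Rightarrow> bool" where
  "hits L U P prev x [] \<longleftrightarrow> P x"
| "hits L U P prev x (b # bs) \<longleftrightarrow>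
     P x \<or> (L < x \<and> x < U \<and> hits L U P b (x + step_incr prev b) bs)"

lemma hits_iff_walk:
  "hits L U P prev x xs \<longleftrightarrow>
     (\<exists>l\<le>length xs. P (walk prev x xs l) \<and>
        (\<forall>j<l. L < walk prev x xs j \<and> walk prev x xs j < U))"
proof (induction xs arbitrary: prev x)
  case Nil
  then show ?case by simp
next
  case (Cons b bs)
  have split_first: "(\<exists>l\<le>Suc n. Q l) \<longleftrightarrow> Q 0 \<or> (\<exists>l\<le>n. Q (Suc l))" for n and Q :: "nat \<Rightarrow> bool"
    using Ex_less_Suc2[of "Suc n" Q] by (simp add: less_Suc_eq_le)
  show ?case
    by (simp add: Cons.IH split_first All_less_Suc2) blast
qed

lemma tau_eq_iff:
  assumes "l \<le> k" "Sx x xs l \<le> L \<or> U \<le> Sx x xs l"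
  shows "tau L U x k xs = l \<longleftrightarrow> (\<forall>j<l. L < Sx x xs j \<and> Sx x xs j < U)"
proof -
  let ?exit = "\<lambda>l. l \<le> k \<and> (Sx x xs l \<le> L \<or> U \<le> Sx x xs l)"
  have tau: "tau L U x k xs = (LEAST l. ?exit l)"
    using assms by (auto simp: tau_def)
  show ?thesis
  proof
    assume "tau L U x k xs = l"
    then show "\<forall>j<l. L < Sx x xs j \<and> Sx x xs j < U"
      using not_less_Least[of _ ?exit] assms(1) by (auto simp: tau not_le)
  next
    assume "\<forall>j<l. L < Sx x xs j \<and> Sx x xs j < U"
    then have "(LEAST l. ?exit l) = l"
      using assms by (intro Least_equality) (auto simp: not_less[symmetric])
    then show "tau L U x k xs = l"
      by (simp add: tau)
  qed
qed

lemma eventA_iff_hits: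
  "length xs = k \<Longrightarrow> eventA L U x k xs \<longleftrightarrow> hits L U (\<lambda>s. s \<le> L) False x xs"
  unfolding eventA_def hits_iff_walk Sx_eq_walk[symmetric]
  using tau_eq_iff[of _ k x xs L U] by blast

lemma eventB_iff_hits:
  "length xs = k \<Longrightarrow> eventB L U x k xs \<longleftrightarrow> hits L U (\<lambda>s. U \<le> s) False x xs"
  unfolding eventB_def hits_iff_walk Sx_eq_walk[symmetric]
  using tau_eq_iff[of _ k x xs L U] by auto

lemma seq_weight_Cons: "seq_weight p (b # bs) = (if b then p else 1 - p) * seq_weight p bs"
  by (simp add: seq_weight_def)

lemma seq_weight_nonneg: "0 \<le> p \<Longrightarrow> p \<le> 1 \<Longrightarrow> 0 \<le> seq_weight p xs"
  by (induction xs) (simp_all add: seq_weight_def)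

lemma sum_bool_lists_Suc:
  "(\<Sum>xs | length xs = Suc k. F xs) = (\<Sum>bs | length bs = k. F (True # bs) + F (False # bs))"
proof -
  let ?S = "{bs :: bool list. length bs = k}"
  have "finite ?S"
    using finite_lists_length_eq[of "UNIV :: bool set" k] by simp
  moreover have "{xs :: bool list. length xs = Suc k} = Cons True ` ?S \<union> Cons False ` ?S"
    by (auto simp: length_Suc_conv)
  ultimately have "(\<Sum>xs | length xs = Suc k. F xs) =
      (\<Sum>xs \<in> Cons True ` ?S. F xs) + (\<Sum>xs \<in> Cons False ` ?S. F xs)"
    by (auto intro: sum.union_disjoint)
  then show ?thesis
    by (simp add: sum.reindex sum.distrib)
qed

lemma sum_seq_weight: "(\<Sum>xs | length xs = k. seq_weight p xs) = 1"
proof (induction k)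
  case 0
  then show ?case by (simp add: seq_weight_def)
next
  case (Suc k)
  then show ?case
    by (simp add: sum_bool_lists_Suc seq_weight_Cons flip: distrib_right sum.distrib)
qed

definition hit_prob ::
    "real \<Rightarrow> int \<Rightarrow> int \<Rightarrow> (int \<Rightarrow> bool) \<Rightarrow> nat \<Rightarrow> bool \<Rightarrow> int \<Rightarrow> real" where
  "hit_prob p L U P k prev x =
     (\<Sum>xs | length xs = k. if hits L U P prev x xs then seq_weight p xs else 0)"

lemma hit_prob_0: "hit_prob p L U P 0 prev x = (if P x then 1 else 0)"
  by (simp add: hit_prob_def seq_weight_def)

lemma hits_if_target: "P x \<Longrightarrow> hits L U P prev x xs"
  by (cases xs) simp_all

lemma hit_prob_Suc:
  "hit_prob p L U P (Suc k) prev x =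
     (if P x then 1
      else if L < x \<and> x < U then
        (1 - p) * hit_prob p L U P k False (x - 1) +
        p * hit_prob p L U P k True (x + step_incr prev True)
      else 0)"
proof -
  consider (target) "P x" | (interior) "\<not> P x" "L < x" "x < U"
    | (outside) "\<not> P x" "\<not> (L < x \<and> x < U)"
    by blast
  then show ?thesis
  proof cases
    case target
    then show ?thesis
      using sum_seq_weight[where k = "Suc k" and p = p] by (simp add: hit_prob_def hits_if_target)
  next
    case interior
    then have "hit_prob p L U P (Suc k) prev x =
      (\<Sum>bs | length bs = k.
         (if hits L U P True (x + step_incr prev True) bs then p * seq_weight p bs else 0) +
         (if hits L U P False (x - 1) bs then (1 - p) * seq_weight p bs else 0))"
      by (simp add: hit_prob_def sum_bool_lists_Suc seq_weight_Cons cong: if_cong)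
    with interior show ?thesis
      by (simp add: hit_prob_def sum.distrib sum_distrib_left if_distrib[of "(*) p"]
          if_distrib[of "(*) (1 - p)"] cong: if_cong)
  next
    case outside
    then have "\<not> hits L U P prev x xs" if "length xs = Suc k" for xs
      using that by (cases xs) auto
    with outside show ?thesis
      by (auto simp: hit_prob_def)
  qed
qed

lemma hit_prob_bounds:
  assumes "0 \<le> p" "p \<le> 1"
  shows "0 \<le> hit_prob p L U P k prev x" "hit_prob p L U P k prev x \<le> 1"
proof -
  show "0 \<le> hit_prob p L U P k prev x"
    unfolding hit_prob_def using seq_weight_nonneg[OF assms] by (simp add: sum_nonneg)
  have "hit_prob p L U P k prev x \<le> (\<Sum>xs | length xs = k. seq_weight p xs)"
    unfolding hit_prob_def using seq_weight_nonneg[OF assms] by (intro sum_mono) simp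
  then show "hit_prob p L U P k prev x \<le> 1"
    by (simp add: sum_seq_weight)
qed

lemma hit_prob_mono:
  assumes "0 \<le> p" "p \<le> 1"
  shows "hit_prob p L U P k prev x \<le> hit_prob p L U P (Suc k) prev x"
proof (induction k arbitrary: prev x)
  case 0
  show ?case
    using assms hit_prob_bounds[OF assms, of L U P 0] by (simp add: hit_prob_0 hit_prob_Suc)
next
  case (Suc k)
  have "(1 - p) * hit_prob p L U P k False (x - 1) +
      p * hit_prob p L U P k True (x + step_incr prev True)
    \<le> (1 - p) * hit_prob p L U P (Suc k) False (x - 1) +
      p * hit_prob p L U P (Suc k) True (x + step_incr prev True)"
    using Suc.IH assms by (intro add_mono mult_left_mono) auto
  then show ?case
    unfolding hit_prob_Suc[of p L U P "Suc k" prev x] hit_prob_Suc[of p L U P k prev x] by simp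
qed

definition hit_prob_lim ::
    "real \<Rightarrow> int \<Rightarrow> int \<Rightarrow> (int \<Rightarrow> bool) \<Rightarrow> bool \<Rightarrow> int \<Rightarrow> real" where
  "hit_prob_lim p L U P prev x = lim (\<lambda>k. hit_prob p L U P k prev x)"

lemma hit_prob_tendsto:
  assumes "0 \<le> p" "p \<le> 1"
  shows "(\<lambda>k. hit_prob p L U P k prev x) \<longlonglongrightarrow> hit_prob_lim p L U P prev x"
proof -
  have "incseq (\<lambda>k. hit_prob p L U P k prev x)"
    by (rule incseq_SucI) (rule hit_prob_mono[OF assms])
  moreover have "\<forall>k. hit_prob p L U P k prev x \<le> 1"
    using hit_prob_bounds(2)[OF assms] by blast
  ultimately obtain l where lim: "(\<lambda>k. hit_prob p L U P k prev x) \<longlonglongrightarrow> l"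
    by (rule incseq_convergent)
  then show ?thesis
    unfolding hit_prob_lim_def by (simp add: limI)
qed

lemma hit_prob_lim_eq:
  assumes "0 \<le> p" "p \<le> 1"
  shows "hit_prob_lim p L U P prev x =
     (if P x then 1
      else if L < x \<and> x < U then
        (1 - p) * hit_prob_lim p L U P False (x - 1) +
        p * hit_prob_lim p L U P True (x + step_incr prev True)
      else 0)"
proof -
  have "(\<lambda>k. hit_prob p L U P (Suc k) prev x) \<longlonglongrightarrow>
     (if P x then 1
      else if L < x \<and> x < U then
        (1 - p) * hit_prob_lim p L U P False (x - 1) +
        p * hit_prob_lim p L U P True (x + step_incr prev True)
      else 0)"
    unfolding hit_prob_Suc using hit_prob_tendsto[OF assms]
    by (cases "P x"; cases "L < x"; cases "x < U") (simp_all add: tendsto_add tendsto_mult_left)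
  then show ?thesis
    using LIMSEQ_Suc[OF hit_prob_tendsto[OF assms]] LIMSEQ_unique by blast
qed

lemma alpha_k_eq_hit_prob: "alpha_k p L U k x = hit_prob p L U (\<lambda>s. s \<le> L) k False x"
  unfolding alpha_k_def hit_prob_def by (intro sum.cong) (simp_all add: eventA_iff_hits)

lemma beta_k_eq_hit_prob: "beta_k p L U k x = hit_prob p L U (\<lambda>s. U \<le> s) k False x"
  unfolding beta_k_def hit_prob_def by (intro sum.cong) (simp_all add: eventB_iff_hits)

lemma alpha_eq_hit_prob_lim: "alpha p L U = hit_prob_lim p L U (\<lambda>s. s \<le> L) False"
  by (simp add: fun_eq_iff alpha_def hit_prob_lim_def alpha_k_eq_hit_prob)

lemma beta_eq_hit_prob_lim: "beta p L U = hit_prob_lim p L U (\<lambda>s. U \<le> s) False"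
  by (simp add: fun_eq_iff beta_def hit_prob_lim_def beta_k_eq_hit_prob)

text \<open>\<open>a\<close> and \<open>c\<close> are the values after a sign \<open>-1\<close> (or at the start) and \<open>+1\<close>. No equation
  is imposed on \<open>c (L + 1)\<close>: the state \<open>(L + 1, +1)\<close> cannot be entered from inside
  \<open>(L, U)\<close>, and the scalar system does not determine it.\<close>

definition chain_eqs ::
    "real \<Rightarrow> int \<Rightarrow> int \<Rightarrow> real \<Rightarrow> real \<Rightarrow> (int \<Rightarrow> real) \<Rightarrow> (int \<Rightarrow> real) \<Rightarrow> bool" where
  "chain_eqs p L U lo hi a c \<longleftrightarrow>
     a L = lo \<and> a U = hi \<and> c U = hi \<and> c (U + 1) = hi \<and>
     (\<forall>x. L < x \<and> x < U \<longrightarrow> a x = (1 - p) * a (x - 1) + p * c (x + 1)) \<and>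
     (\<forall>x. L + 1 < x \<and> x < U \<longrightarrow> c x = (1 - p) * a (x - 1) + p * c (x + 2))"

lemma chain_eqsD:
  assumes "chain_eqs p L U lo hi a c"
  shows "a L = lo" "a U = hi" "c U = hi" "c (U + 1) = hi"
    and "L < x \<Longrightarrow> x < U \<Longrightarrow> a x = (1 - p) * a (x - 1) + p * c (x + 1)"
    and "L + 1 < x \<Longrightarrow> x < U \<Longrightarrow> c x = (1 - p) * a (x - 1) + p * c (x + 2)"
  using assms unfolding chain_eqs_def by blast+

lemma chain_eqs_hit_prob_lim:
  assumes "0 \<le> p" "p \<le> 1" "\<And>x. L < x \<Longrightarrow> x < U \<Longrightarrow> \<not> P x" "P (U + 1) \<longleftrightarrow> P U"
  shows "chain_eqs p L U (of_bool (P L)) (of_bool (P U))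
           (hit_prob_lim p L U P False) (hit_prob_lim p L U P True)"
proof -
  note eq = hit_prob_lim_eq[OF assms(1,2), of L U P]
  have "hit_prob_lim p L U P False x =
      (1 - p) * hit_prob_lim p L U P False (x - 1) + p * hit_prob_lim p L U P True (x + 1)"
    if "L < x" "x < U" for x
    using eq[of False x] assms(3)[OF that] that by (simp add: step_incr_def)
  moreover have "hit_prob_lim p L U P True x =
      (1 - p) * hit_prob_lim p L U P False (x - 1) + p * hit_prob_lim p L U P True (x + 2)"
    if "L + 1 < x" "x < U" for x
    using eq[of True x] assms(3)[of x] that by (simp add: step_incr_def)
  moreover have "hit_prob_lim p L U P False L = of_bool (P L)"
    "hit_prob_lim p L U P False U = of_bool (P U)"
    "hit_prob_lim p L U P True U = of_bool (P U)"
    "hit_prob_lim p L U P True (U + 1) = of_bool (P U)"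
    using eq[of False L] eq[of False U] eq[of True U] eq[of True "U + 1"] assms(4) by simp_all
  ultimately show ?thesis
    unfolding chain_eqs_def by blast
qed

definition scalar_eqs ::
    "real \<Rightarrow> real \<Rightarrow> int \<Rightarrow> int \<Rightarrow> real \<Rightarrow> real \<Rightarrow> (int \<Rightarrow> real) \<Rightarrow> bool" where
  "scalar_eqs p q L U lo hi f \<longleftrightarrow>
     f U = hi \<and>
     f (U - 1) = p * hi + q * f (U - 2) \<and>
     f (U - 2) = p^2 * hi + p * q * f (U - 2) + q * f (U - 3) \<and>
     (\<forall>x. L + 1 \<le> x \<and> x \<le> U - 3 \<longrightarrow>
        f x = p * q * f x + p * f (x + 2) - p * q * f (x + 1) + q * f (x - 1)) \<and>
     f L = lo"

lemma scalar_eqs_if_chain_eqs: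
  assumes "q = 1 - p" "U - L \<ge> 3" "chain_eqs p L U lo hi a c"
  shows "scalar_eqs p q L U lo hi a"
proof -
  note boundary = chain_eqsD(1-4)[OF assms(3)]
  have a_eq: "a x = q * a (x - 1) + p * c (x + 1)" if "L < x" "x < U" for x
    using chain_eqsD(5)[OF assms(3) that] assms(1) by simp
  have c_eq: "c x = q * a (x - 1) + p * c (x + 2)" if "L + 1 < x" "x < U" for x
    using chain_eqsD(6)[OF assms(3) that] assms(1) by simp
  have "a (U - 1) = p * hi + q * a (U - 2)"
    using a_eq[of "U - 1"] assms(2) boundary by simp
  moreover have "a (U - 2) = p^2 * hi + p * q * a (U - 2) + q * a (U - 3)"
  proof -
    have "a (U - 2) = q * a (U - 3) + p * c (U - 1)"
      using a_eq[of "U - 2"] assms(2) by simp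
    moreover have "c (U - 1) = q * a (U - 2) + p * hi"
      using c_eq[of "U - 1"] assms(2) boundary by (simp add: add.commute)
    ultimately show ?thesis
      by (simp add: algebra_simps power2_eq_square)
  qed
  moreover have "a x = p * q * a x + p * a (x + 2) - p * q * a (x + 1) + q * a (x - 1)"
    if "L + 1 \<le> x" "x \<le> U - 3" for x
  proof -
    have "c (x + 1) = q * a x + p * c (x + 3)"
      using c_eq[of "x + 1"] that by (simp add: add.commute)
    moreover have "a (x + 2) = q * a (x + 1) + p * c (x + 3)"
      using a_eq[of "x + 2"] that by (simp add: add.commute)
    ultimately have "p * c (x + 1) = p * q * a x + p * a (x + 2) - p * q * a (x + 1)"
      by (simp add: algebra_simps)
    then show ?thesis
      using a_eq[of x] that by simp
  qed
  ultimately show ?thesis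
    using boundary by (simp add: scalar_eqs_def)
qed

lemma chain_eqs_if_scalar_eqs:
  assumes "p \<noteq> 0" "q = 1 - p" "scalar_eqs p q L U lo hi f"
  obtains c where "chain_eqs p L U lo hi f c"
proof
  \<comment> \<open>\<open>c (y + 1)\<close> is solved from the equation for \<open>a y\<close>.\<close>
  define c where "c y = (if U \<le> y then hi else (f (y - 1) - q * f (y - 2)) / p)" for y
  have eqs: "f U = hi" "f (U - 1) = p * hi + q * f (U - 2)"
    "f (U - 2) = p^2 * hi + p * q * f (U - 2) + q * f (U - 3)" "f L = lo"
    "\<And>x. L + 1 \<le> x \<Longrightarrow> x \<le> U - 3 \<Longrightarrow>
       f x = p * q * f x + p * f (x + 2) - p * q * f (x + 1) + q * f (x - 1)"
    using assms(3) by (simp_all add: scalar_eqs_def)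
  have c_next: "p * c (y + 1) = f y - q * f (y - 1)" if "y < U" for y
  proof (cases "y + 1 < U")
    case True
    then show ?thesis
      using assms(1) by (simp add: c_def)
  next
    case False
    then have "y = U - 1"
      using that by simp
    then show ?thesis
      using eqs(2) by (simp add: c_def)
  qed
  have c_eq: "c x = (1 - p) * f (x - 1) + p * c (x + 2)" if "L + 1 < x" "x < U" for x
  proof -
    have "f (x - 1) - q * f (x - 2) = p * (q * f (x - 1) + p * c (x + 2))"
    proof (cases "x = U - 1")
      case True
      show ?thesis
        using eqs(3) unfolding True by (simp add: c_def algebra_simps power2_eq_square)
    next
      case False
      then have pc: "p * c (x + 2) = f (x + 1) - q * f x"
        using c_next[of "x + 1"] that by (simp add: add.assoc)
      have "f (x - 1) = p * q * f (x - 1) + p * f (x + 1) - p * q * f x + q * f (x - 2)"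
        using eqs(5)[of "x - 1"] that False by (simp add: add.commute)
      moreover have "p * (q * f (x - 1) + p * c (x + 2)) =
          p * q * f (x - 1) + p * f (x + 1) - p * q * f x"
        by (simp add: pc algebra_simps)
      ultimately show ?thesis
        by linarith
    qed
    moreover have "c x = (f (x - 1) - q * f (x - 2)) / p"
      using that by (simp add: c_def)
    ultimately show ?thesis
      using assms(1,2) by simp
  qed
  show "chain_eqs p L U lo hi f c"
    unfolding chain_eqs_def
    using eqs c_eq c_next assms(2) by (simp add: c_def)
qed

lemma scalar_eqs_cong:
  assumes "U - L \<ge> 3" "\<forall>x\<in>{L..U}. f x = g x"
  shows "scalar_eqs p q L U lo hi f \<longleftrightarrow> scalar_eqs p q L U lo hi g"
proof -
  have "f x = g x" if "L \<le> x" "x \<le> U" for x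
    using assms(2) that by simp
  then have "f U = g U" "f (U - 1) = g (U - 1)" "f (U - 2) = g (U - 2)" "f (U - 3) = g (U - 3)"
    "f L = g L"
    "\<And>x. L + 1 \<le> x \<Longrightarrow> x \<le> U - 3 \<Longrightarrow>
       f x = g x \<and> f (x + 1) = g (x + 1) \<and> f (x + 2) = g (x + 2) \<and> f (x - 1) = g (x - 1)"
    using assms(1) by simp_all
  then show ?thesis
    unfolding scalar_eqs_def by (auto simp del: diff_add_eq)
qed

lemma chain_eqs_diff:
  assumes "chain_eqs p L U lo hi a c" "chain_eqs p L U lo hi a' c'"
  shows "chain_eqs p L U 0 0 (\<lambda>x. a x - a' x) (\<lambda>x. c x - c' x)"
proof -
  note a = chain_eqsD[OF assms(1)] and a' = chain_eqsD[OF assms(2)]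
  have
    "a x - a' x = (1 - p) * (a (x - 1) - a' (x - 1)) + p * (c (x + 1) - c' (x + 1))"
    if "L < x" "x < U" for x
    using a(5)[OF that] a'(5)[OF that] by (simp add: algebra_simps)
  moreover have
    "c x - c' x = (1 - p) * (a (x - 1) - a' (x - 1)) + p * (c (x + 2) - c' (x + 2))"
    if "L + 1 < x" "x < U" for x
    using a(6)[OF that] a'(6)[OF that] by (simp add: algebra_simps)
  ultimately show ?thesis
    using a(1-4) a'(1-4) by (simp add: chain_eqs_def)
qed

lemma abs_eq_bound_if_convex_comb:
  fixes p u v m :: real
  assumes "0 < p" "p \<le> 1" "\<bar>u\<bar> \<le> m" "\<bar>v\<bar> \<le> m" "\<bar>(1 - p) * u + p * v\<bar> = m"
  shows "\<bar>v\<bar> = m"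
proof -
  have "m \<le> (1 - p) * \<bar>u\<bar> + p * \<bar>v\<bar>"
    using assms abs_triangle_ineq[of "(1 - p) * u" "p * v"] by (simp add: abs_mult)
  moreover have "(1 - p) * \<bar>u\<bar> \<le> (1 - p) * m"
    using assms by (intro mult_left_mono) auto
  ultimately have "p * m \<le> p * \<bar>v\<bar>"
    by (simp add: algebra_simps)
  then show ?thesis
    using assms(1,4) by (simp add: mult_le_cancel_left_pos)
qed

lemma chain_eqs_homogeneous_vanishes:
  assumes "0 < p" "p \<le> 1" "chain_eqs p L U 0 0 a c" "x \<in> {L..U}"
  shows "a x = 0"
proof -
  note hom = chain_eqsD[OF assms(3)]
  define A where "A = {L..U}"
  define C where "C = {L + 2..U + 1}"
  define vals where "vals = (\<lambda>y. \<bar>a y\<bar>) ` A \<union> (\<lambda>y. \<bar>c y\<bar>) ` C"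
  define m where "m = Max vals"
  have fin: "finite vals"
    by (simp add: vals_def A_def C_def)
  have a_le: "\<bar>a y\<bar> \<le> m" if "y \<in> A" for y
    using fin that by (auto simp: m_def vals_def)
  have c_le: "\<bar>c y\<bar> \<le> m" if "y \<in> C" for y
    using fin that by (auto simp: m_def vals_def)
  have "m \<le> 0"
  proof (rule ccontr)
    assume "\<not> m \<le> 0"
    define T where "T = {y \<in> A. \<bar>a y\<bar> = m} \<union> {y \<in> C. \<bar>c y\<bar> = m}"
    define z where "z = Max T"
    have "vals \<noteq> {}"
      using assms(4) by (auto simp: vals_def A_def)
    then have "m \<in> vals"
      using fin by (simp add: m_def)
    then have "T \<noteq> {}"
      by (auto simp: T_def vals_def)
    moreover have "finite T"
      by (rule finite_subset[of _ "A \<union> C"]) (auto simp: T_def A_def C_def)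
    ultimately have "z \<in> T" and z_max: "\<And>y. y \<in> T \<Longrightarrow> y \<le> z"
      by (simp_all add: z_def)
    then consider "z \<in> A" "\<bar>a z\<bar> = m" | "z \<in> C" "\<bar>c z\<bar> = m"
      by (auto simp: T_def)
    then have "z + 1 \<in> T \<or> z + 2 \<in> T"
    proof cases
      case 1
      with \<open>\<not> m \<le> 0\<close> hom(1,2) have "L < z" "z < U"
        by (auto simp: A_def order_le_less)
      moreover have "\<bar>a (z - 1)\<bar> \<le> m" "\<bar>c (z + 1)\<bar> \<le> m"
        using \<open>L < z\<close> \<open>z < U\<close> by (auto intro!: a_le c_le simp: A_def C_def)
      ultimately have "\<bar>c (z + 1)\<bar> = m"
        using abs_eq_bound_if_convex_comb[OF assms(1,2)] 1 hom(5) by metis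
      with \<open>L < z\<close> \<open>z < U\<close> show ?thesis
        by (simp add: T_def C_def)
    next
      case 2
      with \<open>\<not> m \<le> 0\<close> hom(3,4) have "L + 1 < z" "z < U"
        by (auto simp: C_def order_le_less)
      moreover have "\<bar>a (z - 1)\<bar> \<le> m" "\<bar>c (z + 2)\<bar> \<le> m"
        using \<open>L + 1 < z\<close> \<open>z < U\<close> by (auto intro!: a_le c_le simp: A_def C_def)
      ultimately have "\<bar>c (z + 2)\<bar> = m"
        using abs_eq_bound_if_convex_comb[OF assms(1,2)] 2 hom(6) by metis
      with \<open>L + 1 < z\<close> \<open>z < U\<close> show ?thesis
        by (simp add: T_def C_def)
    qed
    then show False
      using z_max by fastforce
  qed
  then show "a x = 0"
    using a_le[of x] assms(4) by (simp add: A_def)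
qed

lemma scalar_eqs_iff_eq_on:
  assumes "0 < p" "p \<le> 1" "q = 1 - p" "U - L \<ge> 3" "chain_eqs p L U lo hi a c"
  shows "scalar_eqs p q L U lo hi f \<longleftrightarrow> (\<forall>x\<in>{L..U}. f x = a x)"
proof
  assume "scalar_eqs p q L U lo hi f"
  moreover have "p \<noteq> 0"
    using assms(1) by simp
  ultimately obtain c' where "chain_eqs p L U lo hi f c'"
    using chain_eqs_if_scalar_eqs assms(3) by blast
  then have "chain_eqs p L U 0 0 (\<lambda>x. f x - a x) (\<lambda>x. c' x - c x)"
    using assms(5) by (rule chain_eqs_diff)
  then show "\<forall>x\<in>{L..U}. f x = a x"
    using chain_eqs_homogeneous_vanishes[OF assms(1,2)] by fastforce
next
  assume "\<forall>x\<in>{L..U}. f x = a x"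
  then show "scalar_eqs p q L U lo hi f"
    using scalar_eqs_cong[OF assms(4)] scalar_eqs_if_chain_eqs[OF assms(3-5)] by blast
qed

theorem theorem2p2:
  fixes p q :: real and L U :: int
  assumes "0 < p" "p < 1" "q = 1 - p" "L < U" "U - L \<ge> 4"
  shows "(\<forall>f :: int \<Rightarrow> real.
           (f U = 0 \<and>
            f (U - 1) = q * f (U - 2) \<and>
            f (U - 2) = p * q * f (U - 2) + q * f (U - 3) \<and>
            (\<forall>x. L + 1 \<le> x \<and> x \<le> U - 3 \<longrightarrow>
                 f x = p * q * f x + p * f (x + 2) - p * q * f (x + 1) + q * f (x - 1)) \<and>
            f L = 1)
           \<longleftrightarrow> (\<forall>x\<in>{L..U}. f x = alpha p L U x)) \<and>
         (\<forall>f :: int \<Rightarrow> real.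
           (f U = 1 \<and>
            f (U - 1) = p + q * f (U - 2) \<and>
            f (U - 2) = p^2 + p * q * f (U - 2) + q * f (U - 3) \<and>
            (\<forall>x. L + 1 \<le> x \<and> x \<le> U - 3 \<longrightarrow>
                 f x = p * q * f x + p * f (x + 2) - p * q * f (x + 1) + q * f (x - 1)) \<and>
            f L = 0)
           \<longleftrightarrow> (\<forall>x\<in>{L..U}. f x = beta p L U x))"
proof -
  have p: "0 < p" "p \<le> 1" and gap: "U - L \<ge> 3"
    using assms by auto
  have "chain_eqs p L U 1 0 (alpha p L U) (hit_prob_lim p L U (\<lambda>s. s \<le> L) True)"
    using chain_eqs_hit_prob_lim[of p L U "\<lambda>s. s \<le> L"] p assms(4)
    by (simp add: alpha_eq_hit_prob_lim)
  note alpha_iff = scalar_eqs_iff_eq_on[OF p assms(3) gap this]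
  have "chain_eqs p L U 0 1 (beta p L U) (hit_prob_lim p L U (\<lambda>s. U \<le> s) True)"
    using chain_eqs_hit_prob_lim[of p L U "\<lambda>s. U \<le> s"] p assms(4)
    by (simp add: beta_eq_hit_prob_lim)
  note beta_iff = scalar_eqs_iff_eq_on[OF p assms(3) gap this]
  show ?thesis
    using alpha_iff beta_iff by (simp add: scalar_eqs_def)
qed

end
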